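(* Let $ABC$ be a triangle with incenter $I$ and circumcenter $O$, and let $P$ be a point on line $IO$. Let $A', B', C'$ be the feet of the perpendiculars from $P$ to $AI, BI, CI$ respectively. Then the Steiner line of $P$ with respect to triangle $A'B'C'$ is the Euler line of triangle $A'B'C'$.
   Context: The points $A', B', C'$ and $P$ lie on the circle with diameter $PI$, i.e. $P$ lies on the circumcircle of $A'B'C'$. For a point $X$ on the circumcircle of a triangle, the reflections of $X$ over the three sidelines are collinear; the line containing them is the Steiner line of $X$ with respect to the triangle. *)

theory Defs
  imports "HOL-Analysis.Analysis"
begin

definition incenter :: "complex \<Rightarrow> complex \<Rightarrow> complex \<Rightarrow> complex" where
  "incenter A B C =
     (dist B C *\<^sub>R A + dist C A *\<^sub>R B + dist A B *\<^sub>R C) /\<^sub>R (dist B C + dist C A + dist A B)"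

definition circumcenter :: "complex \<Rightarrow> complex \<Rightarrow> complex \<Rightarrow> complex" where
  "circumcenter A B C = (THE Z. dist Z A = dist Z B \<and> dist Z B = dist Z C)"

definition centroid :: "complex \<Rightarrow> complex \<Rightarrow> complex \<Rightarrow> complex" where
  "centroid A B C = (A + B + C) / 3"

definition foot :: "complex \<Rightarrow> complex \<Rightarrow> complex \<Rightarrow> complex" where
  "foot P X Y = X + (((P - X) \<bullet> (Y - X)) / (norm (Y - X))\<^sup>2) *\<^sub>R (Y - X)"

definition reflect :: "complex \<Rightarrow> complex \<Rightarrow> complex \<Rightarrow> complex" where
  "reflect P X Y = 2 * foot P X Y - P"

definition steiner_line :: "complex \<Rightarrow> complex \<Rightarrow> complex \<Rightarrow> complex \<Rightarrow> complex set" where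
  "steiner_line X A B C = affine hull {reflect X B C, reflect X C A, reflect X A B}"

definition euler_line :: "complex \<Rightarrow> complex \<Rightarrow> complex \<Rightarrow> complex set" where
  "euler_line A B C = affine hull {centroid A B C, circumcenter A B C}"

end

theory Submission
  imports Defs
begin

(* Put M = (I + P) / 2, k = cnj (P - I) / 2 and line_dir z = z / cnj z. The foot of the
   perpendicular from P to a line XI is M + k * line_dir (X - I), and P = M + k * line_dir (P - I),
   so A', B', C', P sit on the circle with diameter PI at the unit numbers alpha, beta, gamma, p
   given by the directions of AI, BI, CI and PI = OI. In the classical coordinates
   A = O + K t1^2, B = O + K t2^2, C = O + K t3^2, I = O - K (t1 t2 + t2 t3 + t3 t1) with unit t_i
   one finds alpha = -t1, beta = -t2, gamma = -t3 and p = -(t1 t2 + t2 t3 + t3 t1) / (t1 + t2 + t3),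
   that is p (alpha + beta + gamma) = alpha beta + beta gamma + gamma alpha.
   For p on the circumcircle the reflections of p in the sides lie on a line through the
   orthocenter alpha + beta + gamma; this relation says that the line also passes through the
   center, so it is the Euler line. *)

section \<open>Directions of lines in the complex plane\<close>

(* For z \<noteq> 0, line_dir z is the square of the unit vector z / norm z: it determines the line
   through 0 and z but not its orientation. Note that line_dir 0 = 0. *)
definition line_dir :: "complex \<Rightarrow> complex" where
  "line_dir z = z / cnj z"

lemma cnj_unit: "norm u = 1 \<Longrightarrow> cnj u = inverse u"
  by (metis divide_conv_cnj inverse_eq_divide mult_1)

lemma norm_line_dir: "z \<noteq> 0 \<Longrightarrow> norm (line_dir z) = 1"
  by (simp add: line_dir_def norm_divide)

lemma line_dir_mult: "line_dir (z * w) = line_dir z * line_dir w"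
  by (simp add: line_dir_def)

lemma line_dir_of_real_mult: "r \<noteq> 0 \<Longrightarrow> line_dir (of_real r * z) = line_dir z"
  by (simp add: line_dir_def)

lemma line_dir_uminus: "line_dir (- z) = line_dir z"
  by (simp add: line_dir_def)

lemma line_dir_minus_commute: "line_dir (a - b) = line_dir (b - a)"
  by (metis line_dir_uminus minus_diff_eq)

lemma line_dir_sgn: "line_dir (sgn z) = line_dir z"
  by (simp add: sgn_eq line_dir_def)

lemma line_dir_unit: "norm u = 1 \<Longrightarrow> line_dir u = u\<^sup>2"
  by (cases "u = 0") (auto simp: line_dir_def cnj_unit power2_eq_square divide_inverse)

lemma line_dir_add_unit:
  assumes "norm u = 1" "norm v = 1" "u + v \<noteq> 0"
  shows "line_dir (u + v) = u * v"
proof -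
  have "u \<noteq> 0" "v \<noteq> 0" using assms by auto
  then have "cnj (u + v) = (u + v) / (u * v)"
    by (simp add: cnj_unit assms field_simps)
  then show ?thesis using assms(3) \<open>u \<noteq> 0\<close> \<open>v \<noteq> 0\<close> by (simp add: line_dir_def)
qed

lemma chord_line_dir:
  assumes "norm \<alpha> = 1" "norm \<beta> = 1" "\<alpha> \<noteq> \<beta>"
  shows "line_dir (\<beta> - \<alpha>) = - (\<alpha> * \<beta>)"
  using line_dir_add_unit[of \<beta> "- \<alpha>"] assms by simp

lemma line_dir_of_cnj_eq:
  assumes "K \<noteq> 0" "cnj K = - K * u"
  shows "line_dir K = - inverse u"
  using assms by (simp add: line_dir_def field_simps)

lemma Reals_divide_iff_line_dir:
  assumes "w \<noteq> 0"
  shows "z / w \<in> \<real> \<longleftrightarrow> z = 0 \<or> line_dir z = line_dir w"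
proof -
  have "z / w \<in> \<real> \<longleftrightarrow> cnj (z / w) = z / w" by (simp add: Reals_cnj_iff)
  also have "\<dots> \<longleftrightarrow> z * cnj w = cnj z * w" using assms by (auto simp: field_simps)
  also have "\<dots> \<longleftrightarrow> z = 0 \<or> line_dir z = line_dir w"
    using assms by (cases "z = 0") (auto simp: line_dir_def field_simps)
  finally show ?thesis .
qed

lemma line_dir_affine_hull:
  fixes P X Y :: complex
  assumes "P \<in> affine hull {X, Y}" "P \<noteq> X"
  shows "line_dir (P - X) = line_dir (Y - X)"
proof -
  obtain u v where "P = u *\<^sub>R X + v *\<^sub>R Y" "u + v = 1"
    using assms(1) unfolding affine_hull_2 by blast
  then have "P - X = of_real v * (Y - X)"
    by (simp add: scaleR_conv_of_real algebra_simps flip: eq_diff_eq)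
  moreover have "v \<noteq> 0" using assms(2) calculation by auto
  ultimately show ?thesis by (simp add: line_dir_of_real_mult)
qed

section \<open>Feet, reflections and circumcenters in complex coordinates\<close>

lemma foot_complex:
  assumes "X \<noteq> Y"
  shows "foot P X Y = X + of_real (Re ((P - X) / (Y - X))) * (Y - X)"
proof -
  have "(norm (Y - X))\<^sup>2 = (Re Y - Re X)\<^sup>2 + (Im Y - Im X)\<^sup>2"
    by (simp add: cmod_power2)
  moreover have "(Re Y - Re X)\<^sup>2 + (Im Y - Im X)\<^sup>2 \<noteq> 0"
    using assms by (auto simp: complex_eq_iff)
  ultimately show ?thesis
    by (simp add: foot_def scaleR_conv_of_real inner_complex_def Re_divide power2_eq_square)
qed

lemma reflect_complex:
  assumes "X \<noteq> Y"
  shows "reflect P X Y = X + cnj ((P - X) / (Y - X)) * (Y - X)"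
proof -
  define q where "q = (P - X) / (Y - X)"
  have "P = X + q * (Y - X)" using assms by (simp add: q_def)
  moreover have "2 * of_real (Re q) - q = cnj q"
    using complex_add_cnj[of q] by (simp add: algebra_simps)
  ultimately show ?thesis
    unfolding reflect_def foot_complex[OF assms] q_def[symmetric] by (simp add: algebra_simps)
qed

lemma foot_eq_on_diameter_circle:
  fixes P X I :: complex
  assumes "X \<noteq> I"
  shows "foot P X I = (I + P) / 2 + cnj (P - I) / 2 * line_dir (X - I)"
proof -
  define v w where "v = X - I" and "w = P - I"
  have "v \<noteq> 0" "cnj v \<noteq> 0" using assms by (simp_all add: v_def)
  have "(P - X) / (I - X) = 1 - w / v"
    using \<open>v \<noteq> 0\<close> by (simp add: v_def w_def field_simps)
  then have "foot P X I = X + of_real (Re (1 - w / v)) * (- v)"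
    using assms by (simp add: foot_complex v_def)
  also have "\<dots> = I + of_real (Re (w / v)) * v" by (simp add: v_def algebra_simps)
  also have "of_real (Re (w / v)) = (w / v + cnj w / cnj v) / 2"
    using complex_add_cnj[of "w / v"] by simp
  also have "I + (w / v + cnj w / cnj v) / 2 * v = (I + P) / 2 + cnj w / 2 * line_dir v"
    using \<open>v \<noteq> 0\<close> \<open>cnj v \<noteq> 0\<close> by (simp add: line_dir_def w_def field_simps)
  finally show ?thesis by (simp add: v_def w_def)
qed

lemma collinear_complex_iff:
  fixes X Y Z :: complex
  shows "collinear {X, Y, Z} \<longleftrightarrow> (Z - X) / (Y - X) \<in> \<real>"
  using collinear_3[of Y X Z] collinear_iff_Reals[of "Y - X" "Z - X"]
  by (cases "X = 0") (auto simp: insert_commute)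

lemma not_collinear_imp_line_dir_neq:
  fixes A B C :: complex
  assumes "\<not> collinear {A, B, C}"
  shows "line_dir (B - A) \<noteq> line_dir (C - A)"
proof
  assume "line_dir (B - A) = line_dir (C - A)"
  moreover have "B \<noteq> A" using assms by auto
  ultimately have "(C - A) / (B - A) \<in> \<real>" by (simp add: Reals_divide_iff_line_dir)
  then show False using assms by (simp add: collinear_complex_iff)
qed

lemma complex_eq_0_if_orthogonal_non_parallel:
  fixes u v w :: complex
  assumes "inner w u = 0" "inner w v = 0" "v / u \<notin> \<real>"
  shows "w = 0"
proof (rule ccontr)
  assume "w \<noteq> 0"
  have "x / (\<i> * w) \<in> \<real>" if "inner w x = 0" for x
    using that \<open>w \<noteq> 0\<close>
    by (simp add: complex_is_Real_iff inner_complex_def Im_divide algebra_simps)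
  then have "(v / (\<i> * w)) / (u / (\<i> * w)) \<in> \<real>" using assms(1,2) by (blast intro: Reals_divide)
  then show False using assms(3) \<open>w \<noteq> 0\<close> by (simp add: field_simps)
qed

lemma inner_diff_eq_0_if_equidistant:
  fixes Q R U V :: complex
  assumes "dist R U = dist R V" "dist Q U = dist Q V"
  shows "inner (R - Q) (V - U) = 0"
proof -
  have "(dist R U)\<^sup>2 = (dist R V)\<^sup>2" "(dist Q U)\<^sup>2 = (dist Q V)\<^sup>2" using assms by simp_all
  then show ?thesis
    by (simp add: dist_norm power2_norm_eq_inner inner_diff_left inner_diff_right inner_commute)
qed

lemma circumcenter_eqI:
  fixes X Y Z Q :: complex
  assumes "\<not> collinear {X, Y, Z}" "dist Q X = dist Q Y" "dist Q Y = dist Q Z"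
  shows "circumcenter X Y Z = Q"
  unfolding circumcenter_def
proof (rule the_equality)
  fix R assume "dist R X = dist R Y \<and> dist R Y = dist R Z"
  then have "inner (R - Q) (Y - X) = 0" "inner (R - Q) (Z - X) = 0"
    using assms(2,3) inner_diff_eq_0_if_equidistant[of R _ _ Q] by auto
  then show "R = Q"
    using complex_eq_0_if_orthogonal_non_parallel assms(1) by (force simp: collinear_complex_iff)
qed (use assms in simp)

section \<open>Steiner lines of points on the circumcircle\<close>

lemma affine_hull_3_eq_affine_hull_2:
  fixes G M R1 R2 R3 :: "'a::euclidean_space"
  assumes "{R1, R2, R3} \<subseteq> affine hull {G, M}" "R1 \<noteq> R2 \<or> R2 \<noteq> R3"
  shows "affine hull {R1, R2, R3} = affine hull {G, M}"
proof (rule ccontr)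
  assume "affine hull {R1, R2, R3} \<noteq> affine hull {G, M}"
  moreover have "affine hull {R1, R2, R3} \<subseteq> affine hull {G, M}"
    using assms(1) by (simp add: hull_minimal affine_affine_hull)
  ultimately have "aff_dim {R1, R2, R3} < aff_dim {G, M}"
    by (intro aff_dim_psubset) (simp add: psubset_eq)
  also have "\<dots> \<le> 1" by simp
  finally have "aff_dim {R1, R2, R3} \<le> 0" by simp
  moreover have "aff_dim {R1, R2} \<le> aff_dim {R1, R2, R3}" "aff_dim {R2, R3} \<le> aff_dim {R1, R2, R3}"
    by (rule aff_dim_subset; blast)+
  ultimately show False using assms(2) by (auto split: if_splits)
qed

lemma not_collinear_on_circle:
  fixes M k \<alpha> \<beta> \<gamma> :: complex
  assumes "k \<noteq> 0" "norm \<alpha> = 1" "norm \<beta> = 1" "norm \<gamma> = 1" "\<alpha> \<noteq> \<beta>" "\<beta> \<noteq> \<gamma>" "\<gamma> \<noteq> \<alpha>"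
  shows "\<not> collinear {M + k * \<alpha>, M + k * \<beta>, M + k * \<gamma>}"
proof
  assume "collinear {M + k * \<alpha>, M + k * \<beta>, M + k * \<gamma>}"
  then have "(\<gamma> - \<alpha>) / (\<beta> - \<alpha>) \<in> \<real>"
    using assms(1) by (simp add: collinear_complex_iff flip: right_diff_distrib)
  then have "line_dir (\<gamma> - \<alpha>) = line_dir (\<beta> - \<alpha>)"
    using assms by (simp add: Reals_divide_iff_line_dir)
  then have "\<alpha> * \<gamma> = \<alpha> * \<beta>" using assms by (simp add: chord_line_dir)
  then show False using assms by simp
qed

lemma circumcenter_on_circle:
  fixes M k \<alpha> \<beta> \<gamma> :: complex
  assumes "k \<noteq> 0" "norm \<alpha> = 1" "norm \<beta> = 1" "norm \<gamma> = 1" "\<alpha> \<noteq> \<beta>" "\<beta> \<noteq> \<gamma>" "\<gamma> \<noteq> \<alpha>"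
  shows "circumcenter (M + k * \<alpha>) (M + k * \<beta>) (M + k * \<gamma>) = M"
  using assms by (intro circumcenter_eqI not_collinear_on_circle) (simp_all add: dist_norm norm_mult)

lemma reflect_on_circle:
  fixes M k p \<alpha> \<beta> :: complex
  assumes "k \<noteq> 0" "norm p = 1" "norm \<alpha> = 1" "norm \<beta> = 1" "\<alpha> \<noteq> \<beta>"
  shows "reflect (M + k * p) (M + k * \<alpha>) (M + k * \<beta>) = M + k * (\<alpha> + \<beta> - \<alpha> * \<beta> / p)"
proof -
  have "p \<noteq> 0" "\<alpha> \<noteq> 0" "\<beta> \<noteq> 0" using assms by auto
  then show ?thesis
    using assms by (simp add: reflect_complex cnj_unit field_simps)
qed

(* The reflection of p in the side yz, minus the orthocenter x + y + z, is -(x + y z / p); its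
   line_dir x y z / p is that of x + y + z by the relation. *)
lemma steiner_reflection_ratio_real:
  fixes p x y z :: complex
  assumes unit: "norm p = 1" "norm x = 1" "norm y = 1" "norm z = 1"
    and "x + y + z \<noteq> 0" and rel: "p * (x + y + z) = x * y + y * z + z * x"
  shows "(y + z - y * z / p) / (x + y + z) \<in> \<real>"
proof -
  have nz: "p \<noteq> 0" "x \<noteq> 0" "y \<noteq> 0" "z \<noteq> 0" using unit by auto
  have "cnj (x + y + z) = p * (x + y + z) / (x * y * z)"
    using nz unfolding rel by (simp add: cnj_unit unit field_simps)
  then have "line_dir (x + y + z) = x * y * z / p"
    using nz \<open>x + y + z \<noteq> 0\<close> by (simp add: line_dir_def)
  moreover have "norm (y * z / p) = 1" using unit by (simp add: norm_mult norm_divide)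
  ultimately have "(x + y * z / p) / (x + y + z) \<in> \<real>"
    using unit \<open>x + y + z \<noteq> 0\<close> line_dir_add_unit[of x "y * z / p"]
    by (auto simp: Reals_divide_iff_line_dir mult.assoc)
  then have "1 - (x + y * z / p) / (x + y + z) \<in> \<real>" by (simp add: Reals_diff)
  also have "1 - (x + y * z / p) / (x + y + z) = (y + z - y * z / p) / (x + y + z)"
    using \<open>x + y + z \<noteq> 0\<close> by (simp add: field_simps)
  finally show ?thesis .
qed

lemma steiner_line_eq_euler_line_on_circle:
  fixes M k p \<alpha> \<beta> \<gamma> :: complex
  assumes k: "k \<noteq> 0"
    and unit: "norm p = 1" "norm \<alpha> = 1" "norm \<beta> = 1" "norm \<gamma> = 1"
    and distinct: "\<alpha> \<noteq> \<beta>" "\<beta> \<noteq> \<gamma>" "\<gamma> \<noteq> \<alpha>"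
    and sum: "\<alpha> + \<beta> + \<gamma> \<noteq> 0"
    and rel: "p * (\<alpha> + \<beta> + \<gamma>) = \<alpha> * \<beta> + \<beta> * \<gamma> + \<gamma> * \<alpha>"
  shows "steiner_line (M + k * p) (M + k * \<alpha>) (M + k * \<beta>) (M + k * \<gamma>)
           = euler_line (M + k * \<alpha>) (M + k * \<beta>) (M + k * \<gamma>)
       \<and> centroid (M + k * \<alpha>) (M + k * \<beta>) (M + k * \<gamma>)
           \<noteq> circumcenter (M + k * \<alpha>) (M + k * \<beta>) (M + k * \<gamma>)"
proof -
  define \<sigma> where "\<sigma> = \<alpha> + \<beta> + \<gamma>"
  define G where "G = M + k * \<sigma> / 3"
  define R where "R x y = M + k * (x + y - x * y / p)" for x y
  have O: "circumcenter (M + k * \<alpha>) (M + k * \<beta>) (M + k * \<gamma>) = M"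
    using circumcenter_on_circle k unit distinct by blast
  have "centroid (M + k * \<alpha>) (M + k * \<beta>) (M + k * \<gamma>) = G"
    by (simp add: centroid_def G_def \<sigma>_def field_simps)
  moreover have "G \<noteq> M" using k sum by (simp add: G_def \<sigma>_def)
  moreover have "R x y \<in> affine hull {G, M}" if "(x + y - x * y / p) / \<sigma> \<in> \<real>" for x y
  proof -
    have "(R x y - M) / (G - M) = 3 * ((x + y - x * y / p) / \<sigma>)"
      using k by (simp add: R_def G_def)
    also have "\<dots> \<in> \<real>" using that by (intro Reals_mult) auto
    finally have "collinear {M, G, R x y}" by (simp add: collinear_complex_iff)
    then show ?thesis
      using \<open>G \<noteq> M\<close> collinear_3_affine_hull by (metis insert_commute)
  qed
  then have "{R \<beta> \<gamma>, R \<gamma> \<alpha>, R \<alpha> \<beta>} \<subseteq> affine hull {G, M}"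
    using steiner_reflection_ratio_real[OF unit(1,2,3,4)] steiner_reflection_ratio_real[OF unit(1,3,4,2)]
      steiner_reflection_ratio_real[OF unit(1,4,2,3)] sum rel
    by (simp add: \<sigma>_def ac_simps)
  moreover have "R \<beta> \<gamma> \<noteq> R \<gamma> \<alpha> \<or> R \<gamma> \<alpha> \<noteq> R \<alpha> \<beta>"
  proof (rule ccontr)
    assume "\<not> ?thesis"
    then have "k * ((\<beta> - \<alpha>) * (p - \<gamma>) / p) = 0" "k * ((\<gamma> - \<beta>) * (p - \<alpha>) / p) = 0"
      using unit by (auto simp: R_def field_simps)
    then show False using k distinct unit(1) by auto
  qed
  ultimately show ?thesis
    using k unit distinct O
    by (simp add: steiner_line_def euler_line_def reflect_on_circle affine_hull_3_eq_affine_hull_2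
        flip: R_def)
qed

section \<open>Complex coordinates of a triangle and its incenter\<close>

(* Conjugation gives the second relation a / d1 + b / d2 + c / d3 = 0, so (a, b, c) is
   proportional to the cross product of (d1, d2, d3) and (1 / d1, 1 / d2, 1 / d3). *)
lemma real_relation_of_unit_vectors:
  fixes a b c :: real and d1 d2 d3 :: complex
  assumes unit: "norm d1 = 1" "norm d2 = 1" "norm d3 = 1"
    and "d2\<^sup>2 \<noteq> d3\<^sup>2"
    and rel: "a * d1 + b * d2 + c * d3 = 0"
  obtains L where "a = L * d1 * (d2\<^sup>2 - d3\<^sup>2)" "b = L * d2 * (d3\<^sup>2 - d1\<^sup>2)"
    "c = L * d3 * (d1\<^sup>2 - d2\<^sup>2)" "cnj L = - L * (d1 * d2 * d3)\<^sup>2"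
proof -
  have nz: "d1 \<noteq> 0" "d2 \<noteq> 0" "d3 \<noteq> 0" "d2\<^sup>2 - d3\<^sup>2 \<noteq> 0" using assms by auto
  have "cnj (a * d1 + b * d2 + c * d3) = 0" using rel by simp
  then have rel': "a * d2 * d3 + b * d3 * d1 + c * d1 * d2 = 0"
    using nz by (simp add: cnj_unit unit field_simps)
  define L where "L = a / (d1 * (d2\<^sup>2 - d3\<^sup>2))"
  show thesis
  proof
    show "a = L * d1 * (d2\<^sup>2 - d3\<^sup>2)" using nz by (simp add: L_def)
    have "b * d1 * (d2\<^sup>2 - d3\<^sup>2) = a * d2 * (d3\<^sup>2 - d1\<^sup>2)"
      using rel rel' by algebra
    then show "b = L * d2 * (d3\<^sup>2 - d1\<^sup>2)" using nz by (simp add: L_def field_simps)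
    have "c * d1 * (d2\<^sup>2 - d3\<^sup>2) = a * d3 * (d1\<^sup>2 - d2\<^sup>2)"
      using rel rel' by algebra
    then show "c = L * d3 * (d1\<^sup>2 - d2\<^sup>2)" using nz by (simp add: L_def field_simps)
    show "cnj L = - L * (d1 * d2 * d3)\<^sup>2"
      using nz by (simp add: L_def cnj_unit unit field_simps) (simp add: algebra_simps power2_eq_square)
  qed
qed

lemma unit_pairwise_products:
  fixes d1 d2 d3 :: complex
  assumes unit: "norm d1 = 1" "norm d2 = 1" "norm d3 = 1"
    and "d1\<^sup>2 \<noteq> d2\<^sup>2" "d2\<^sup>2 \<noteq> d3\<^sup>2" "d3\<^sup>2 \<noteq> d1\<^sup>2"
  shows "norm (d2 * d3) = 1" "norm (d3 * d1) = 1" "norm (d1 * d2) = 1"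
    "d2 * d3 \<noteq> d3 * d1" "d3 * d1 \<noteq> d1 * d2" "d1 * d2 \<noteq> d2 * d3"
    "d2 * d3 + d3 * d1 \<noteq> 0" "d3 * d1 + d1 * d2 \<noteq> 0" "d1 * d2 + d2 * d3 \<noteq> 0"
proof -
  have "d1 \<noteq> d2" "d2 \<noteq> d3" "d3 \<noteq> d1" "d1 + d2 \<noteq> 0" "d2 + d3 \<noteq> 0" "d3 + d1 \<noteq> 0"
    using assms(4-6) by (auto simp: add_eq_0_iff2)
  moreover have "d2 * d3 + d3 * d1 = d3 * (d1 + d2)" "d3 * d1 + d1 * d2 = d1 * (d2 + d3)"
    "d1 * d2 + d2 * d3 = d2 * (d3 + d1)"
    by (simp_all add: algebra_simps)
  ultimately show "d2 * d3 \<noteq> d3 * d1" "d3 * d1 \<noteq> d1 * d2" "d1 * d2 \<noteq> d2 * d3"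
    "d2 * d3 + d3 * d1 \<noteq> 0" "d3 * d1 + d1 * d2 \<noteq> 0" "d1 * d2 + d2 * d3 \<noteq> 0"
    using unit by auto
  show "norm (d2 * d3) = 1" "norm (d3 * d1) = 1" "norm (d1 * d2) = 1"
    using unit by (simp_all add: norm_mult)
qed

lemma triangle_unit_sides:
  fixes A B C :: complex
  assumes "\<not> collinear {A, B, C}"
  obtains d1 d2 d3 :: complex where "norm d1 = 1" "norm d2 = 1" "norm d3 = 1"
    "d1\<^sup>2 \<noteq> d2\<^sup>2" "d2\<^sup>2 \<noteq> d3\<^sup>2" "d3\<^sup>2 \<noteq> d1\<^sup>2"
    "B - C = dist B C * d1" "C - A = dist C A * d2" "A - B = dist A B * d3"
proof -
  define d1 d2 d3 where "d1 = sgn (B - C)" and "d2 = sgn (C - A)" and "d3 = sgn (A - B)"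
  have distinct: "A \<noteq> B" "B \<noteq> C" "C \<noteq> A" using assms by (auto simp: insert_commute)
  then have unit: "norm d1 = 1" "norm d2 = 1" "norm d3 = 1"
    by (simp_all add: d1_def d2_def d3_def norm_sgn)
  then have "d1\<^sup>2 = line_dir (B - C)" "d2\<^sup>2 = line_dir (C - A)" "d3\<^sup>2 = line_dir (A - B)"
    by (simp_all add: d1_def d2_def d3_def line_dir_sgn flip: line_dir_unit)
  moreover have "line_dir (B - C) \<noteq> line_dir (A - C)" "line_dir (C - A) \<noteq> line_dir (B - A)"
    "line_dir (A - B) \<noteq> line_dir (C - B)"
    using assms by (auto intro!: not_collinear_imp_line_dir_neq simp: insert_commute)
  ultimately have "d1\<^sup>2 \<noteq> d2\<^sup>2" "d2\<^sup>2 \<noteq> d3\<^sup>2" "d3\<^sup>2 \<noteq> d1\<^sup>2"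
    by (metis line_dir_minus_commute)+
  moreover have "B - C = dist B C * d1" "C - A = dist C A * d2" "A - B = dist A B * d3"
    using distinct by (simp_all add: d1_def d2_def d3_def sgn_eq dist_norm)
  ultimately show thesis using unit by (intro that)
qed

lemma triangle_side_lengths_complex:
  fixes A B C :: complex
  assumes "\<not> collinear {A, B, C}"
  obtains d1 d2 d3 L :: complex where "norm d1 = 1" "norm d2 = 1" "norm d3 = 1"
    "d1\<^sup>2 \<noteq> d2\<^sup>2" "d2\<^sup>2 \<noteq> d3\<^sup>2" "d3\<^sup>2 \<noteq> d1\<^sup>2"
    "B - C = dist B C * d1" "C - A = dist C A * d2" "A - B = dist A B * d3"
    "dist B C = L * d1 * (d2\<^sup>2 - d3\<^sup>2)" "dist C A = L * d2 * (d3\<^sup>2 - d1\<^sup>2)"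
    "dist A B = L * d3 * (d1\<^sup>2 - d2\<^sup>2)" "cnj L = - L * (d1 * d2 * d3)\<^sup>2"
proof -
  obtain d1 d2 d3 :: complex where unit: "norm d1 = 1" "norm d2 = 1" "norm d3 = 1"
    and squares_distinct: "d1\<^sup>2 \<noteq> d2\<^sup>2" "d2\<^sup>2 \<noteq> d3\<^sup>2" "d3\<^sup>2 \<noteq> d1\<^sup>2"
    and sides: "B - C = dist B C * d1" "C - A = dist C A * d2" "A - B = dist A B * d3"
    by (rule triangle_unit_sides[OF assms])
  have "dist B C * d1 + dist C A * d2 + dist A B * d3 = 0"
    by (simp flip: sides)
  then obtain L where "dist B C = L * d1 * (d2\<^sup>2 - d3\<^sup>2)" "dist C A = L * d2 * (d3\<^sup>2 - d1\<^sup>2)"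
    "dist A B = L * d3 * (d1\<^sup>2 - d2\<^sup>2)" "cnj L = - L * (d1 * d2 * d3)\<^sup>2"
    using real_relation_of_unit_vectors[OF unit squares_distinct(2)] by blast
  with unit squares_distinct sides show thesis by (intro that)
qed

(* The t_i are products of two unit side vectors. Changing the signs of two of them preserves
   every other property listed but turns -K (t1 t2 + t2 t3 + t3 t1) into an excenter. *)
lemma triangle_complex_coordinates:
  fixes A B C :: complex
  assumes "\<not> collinear {A, B, C}"
  obtains t1 t2 t3 K where
    "norm t1 = 1" "norm t2 = 1" "norm t3 = 1"
    "t1 \<noteq> t2" "t2 \<noteq> t3" "t3 \<noteq> t1" "t1 + t2 \<noteq> 0" "t2 + t3 \<noteq> 0" "t3 + t1 \<noteq> 0"
    "K \<noteq> 0" "cnj K = - K * t1 * t2 * t3"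
    "A - circumcenter A B C = K * t1\<^sup>2" "B - circumcenter A B C = K * t2\<^sup>2"
    "C - circumcenter A B C = K * t3\<^sup>2"
    "circumcenter A B C - incenter A B C = K * (t1 * t2 + t2 * t3 + t3 * t1)"
proof -
  obtain d1 d2 d3 L :: complex where unit: "norm d1 = 1" "norm d2 = 1" "norm d3 = 1"
    and squares_distinct: "d1\<^sup>2 \<noteq> d2\<^sup>2" "d2\<^sup>2 \<noteq> d3\<^sup>2" "d3\<^sup>2 \<noteq> d1\<^sup>2"
    and sides: "B - C = dist B C * d1" "C - A = dist C A * d2" "A - B = dist A B * d3"
    and L: "dist B C = L * d1 * (d2\<^sup>2 - d3\<^sup>2)" "dist C A = L * d2 * (d3\<^sup>2 - d1\<^sup>2)"
      "dist A B = L * d3 * (d1\<^sup>2 - d2\<^sup>2)" "cnj L = - L * (d1 * d2 * d3)\<^sup>2"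
    by (rule triangle_side_lengths_complex[OF assms])
  define a b c where "a = dist B C" and "b = dist C A" and "c = dist A B"
  have "A \<noteq> B" "B \<noteq> C" "C \<noteq> A" using assms by (auto simp: insert_commute)
  then have "a > 0" "b > 0" "c > 0" by (simp_all add: a_def b_def c_def)
  note sides = sides[folded a_def b_def c_def] and L = L[folded a_def b_def c_def]
  define K t1 t2 t3 where "K = - L" and "t1 = d2 * d3" and "t2 = d3 * d1" and "t3 = d1 * d2"
  define Q where "Q = A - K * t1\<^sup>2"
  have "K \<noteq> 0" using L(1) \<open>a > 0\<close> by (auto simp: K_def)
  have "B = A - c * d3" "C = A + b * d2" by (simp_all flip: sides)
  then have vertices: "A = Q + K * t1\<^sup>2" "B = Q + K * t2\<^sup>2" "C = Q + K * t3\<^sup>2"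
    unfolding L Q_def K_def t1_def t2_def t3_def by (simp_all add: algebra_simps power2_eq_square)
  note t = unit_pairwise_products[OF unit squares_distinct, folded t1_def t2_def t3_def]
  have circ: "circumcenter A B C = Q"
    using assms \<open>K \<noteq> 0\<close> t(1-3)
    by (intro circumcenter_eqI) (simp_all add: vertices dist_norm norm_mult norm_power)
  define S :: complex where "S = of_real a + of_real b + of_real c"
  have "S \<noteq> 0"
    using \<open>a > 0\<close> \<open>b > 0\<close> \<open>c > 0\<close> by (simp add: S_def flip: of_real_add)
  have "incenter A B C = (a * A + b * B + c * C) / S"
    by (simp add: incenter_def a_def b_def c_def S_def scaleR_conv_of_real divide_inverse_commute)
  also have "\<dots> = Q + K * (a * t1\<^sup>2 + b * t2\<^sup>2 + c * t3\<^sup>2) / S"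
    using \<open>S \<noteq> 0\<close> by (simp add: vertices S_def field_simps)
  also have "a * t1\<^sup>2 + b * t2\<^sup>2 + c * t3\<^sup>2 = - S * (t1 * t2 + t2 * t3 + t3 * t1)"
    unfolding S_def L t1_def t2_def t3_def by algebra
  also have "Q + K * (- S * (t1 * t2 + t2 * t3 + t3 * t1)) / S = Q - K * (t1 * t2 + t2 * t3 + t3 * t1)"
    using \<open>S \<noteq> 0\<close> by simp
  finally have inc: "incenter A B C = Q - K * (t1 * t2 + t2 * t3 + t3 * t1)" .
  have "cnj K = - K * t1 * t2 * t3"
    by (simp add: K_def L(4) t1_def t2_def t3_def power2_eq_square algebra_simps)
  moreover have "A - circumcenter A B C = K * t1\<^sup>2" "B - circumcenter A B C = K * t2\<^sup>2"
    "C - circumcenter A B C = K * t3\<^sup>2"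
    "circumcenter A B C - incenter A B C = K * (t1 * t2 + t2 * t3 + t3 * t1)"
    unfolding circ inc using vertices by simp_all
  ultimately show thesis
    using t \<open>K \<noteq> 0\<close> by (intro that[of t1 t2 t3 K]) (simp_all add: add.commute)
qed

lemma line_dir_incenter_vertex:
  fixes K x y z :: complex
  assumes "K \<noteq> 0" "cnj K = - K * x * y * z"
    and unit: "norm x = 1" "norm y = 1" "norm z = 1" and "x + y \<noteq> 0" "x + z \<noteq> 0"
  shows "line_dir (K * (x + y) * (x + z)) = - x"
proof -
  have "x \<noteq> 0" "y \<noteq> 0" "z \<noteq> 0" using unit by auto
  moreover have "line_dir K = - inverse (x * y * z)"
    using assms(1,2) by (simp add: line_dir_of_cnj_eq mult.assoc)
  moreover have "line_dir (K * (x + y) * (x + z)) = line_dir K * line_dir (x + y) * line_dir (x + z)"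
    by (simp only: line_dir_mult)
  ultimately show ?thesis
    using assms by (simp add: line_dir_add_unit field_simps)
qed

lemma line_dir_circumcenter_incenter:
  fixes K x y z :: complex
  assumes "K \<noteq> 0" "cnj K = - K * x * y * z"
    and unit: "norm x = 1" "norm y = 1" "norm z = 1" and "x * y + y * z + z * x \<noteq> 0"
  shows "x + y + z \<noteq> 0"
    "line_dir (K * (x * y + y * z + z * x)) * (x + y + z) = - (x * y + y * z + z * x)"
proof -
  define s1 s2 where "s1 = x + y + z" and "s2 = x * y + y * z + z * x"
  have nz: "x \<noteq> 0" "y \<noteq> 0" "z \<noteq> 0" using unit by auto
  then have "cnj s2 = s1 / (x * y * z)"
    by (simp add: s1_def s2_def cnj_unit unit field_simps)
  moreover have "s2 \<noteq> 0" using assms(6) by (simp add: s2_def)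
  ultimately have "s1 \<noteq> 0" "line_dir s2 = x * y * z * s2 / s1"
    by (auto simp: line_dir_def)
  have "line_dir K = - inverse (x * y * z)"
    using assms(1,2) by (simp add: line_dir_of_cnj_eq mult.assoc)
  have "line_dir (K * s2) * s1 = line_dir K * (x * y * z) * s2"
    using \<open>s1 \<noteq> 0\<close> by (simp add: line_dir_mult \<open>line_dir s2 = _\<close>)
  also have "line_dir K * (x * y * z) = - 1"
    using nz by (simp add: \<open>line_dir K = _\<close> field_simps)
  finally have "line_dir (K * s2) * s1 = - s2" by simp
  with \<open>s1 \<noteq> 0\<close> show "x + y + z \<noteq> 0"
    "line_dir (K * (x * y + y * z + z * x)) * (x + y + z) = - (x * y + y * z + z * x)"
    unfolding s1_def s2_def .
qed

lemma incenter_circumcenter_line_dirs: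
  fixes A B C :: complex
  assumes "\<not> collinear {A, B, C}" and "incenter A B C \<noteq> circumcenter A B C"
  defines "\<alpha> \<equiv> line_dir (A - incenter A B C)" and "\<beta> \<equiv> line_dir (B - incenter A B C)"
    and "\<gamma> \<equiv> line_dir (C - incenter A B C)"
    and "p \<equiv> line_dir (circumcenter A B C - incenter A B C)"
  shows "A \<noteq> incenter A B C" "B \<noteq> incenter A B C" "C \<noteq> incenter A B C"
    "\<alpha> \<noteq> \<beta>" "\<beta> \<noteq> \<gamma>" "\<gamma> \<noteq> \<alpha>" "\<alpha> + \<beta> + \<gamma> \<noteq> 0"
    "p * (\<alpha> + \<beta> + \<gamma>) = \<alpha> * \<beta> + \<beta> * \<gamma> + \<gamma> * \<alpha>"
proof -
  obtain t1 t2 t3 K where unit: "norm t1 = 1" "norm t2 = 1" "norm t3 = 1"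
    and distinct: "t1 \<noteq> t2" "t2 \<noteq> t3" "t3 \<noteq> t1"
    and nonantipodal: "t1 + t2 \<noteq> 0" "t2 + t3 \<noteq> 0" "t3 + t1 \<noteq> 0"
    and K: "K \<noteq> 0" "cnj K = - K * t1 * t2 * t3"
    and coords: "A - circumcenter A B C = K * t1\<^sup>2" "B - circumcenter A B C = K * t2\<^sup>2"
      "C - circumcenter A B C = K * t3\<^sup>2"
      "circumcenter A B C - incenter A B C = K * (t1 * t2 + t2 * t3 + t3 * t1)"
    using triangle_complex_coordinates[OF assms(1)] by blast
  have via_circumcenter:
    "X - incenter A B C = (X - circumcenter A B C) + (circumcenter A B C - incenter A B C)" for X
    by simp
  have diffs: "A - incenter A B C = K * (t1 + t2) * (t1 + t3)"
    "B - incenter A B C = K * (t2 + t3) * (t2 + t1)"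
    "C - incenter A B C = K * (t3 + t1) * (t3 + t2)"
    unfolding via_circumcenter[of A] via_circumcenter[of B] via_circumcenter[of C] coords
    by (simp_all add: algebra_simps power2_eq_square)
  have "\<alpha> = - t1" unfolding \<alpha>_def diffs
    by (rule line_dir_incenter_vertex) (use K unit nonantipodal in \<open>simp_all add: add.commute\<close>)
  have "\<beta> = - t2" unfolding \<beta>_def diffs
    by (rule line_dir_incenter_vertex) (use K unit nonantipodal in \<open>simp_all add: add.commute mult_ac\<close>)
  have "\<gamma> = - t3" unfolding \<gamma>_def diffs
    by (rule line_dir_incenter_vertex) (use K unit nonantipodal in \<open>simp_all add: add.commute mult_ac\<close>)
  have "t1 * t2 + t2 * t3 + t3 * t1 \<noteq> 0" using assms(2) coords(4) by auto
  then have "t1 + t2 + t3 \<noteq> 0" "p * (t1 + t2 + t3) = - (t1 * t2 + t2 * t3 + t3 * t1)"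
    using line_dir_circumcenter_incenter[OF K unit] by (simp_all add: p_def coords(4))
  show "A \<noteq> incenter A B C" "B \<noteq> incenter A B C" "C \<noteq> incenter A B C"
    using diffs K(1) nonantipodal by (auto simp: add.commute)
  show "\<alpha> \<noteq> \<beta>" "\<beta> \<noteq> \<gamma>" "\<gamma> \<noteq> \<alpha>"
    using distinct by (simp_all add: \<open>\<alpha> = - t1\<close> \<open>\<beta> = - t2\<close> \<open>\<gamma> = - t3\<close>)
  have "\<alpha> + \<beta> + \<gamma> = - (t1 + t2 + t3)" "\<alpha> * \<beta> + \<beta> * \<gamma> + \<gamma> * \<alpha> = t1 * t2 + t2 * t3 + t3 * t1"
    by (simp_all add: \<open>\<alpha> = - t1\<close> \<open>\<beta> = - t2\<close> \<open>\<gamma> = - t3\<close> algebra_simps)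
  then show "\<alpha> + \<beta> + \<gamma> \<noteq> 0" "p * (\<alpha> + \<beta> + \<gamma>) = \<alpha> * \<beta> + \<beta> * \<gamma> + \<gamma> * \<alpha>"
    using \<open>t1 + t2 + t3 \<noteq> 0\<close> \<open>p * (t1 + t2 + t3) = _\<close>
    by (simp_all only: mult_minus_right neg_equal_0_iff_equal minus_minus not_False_eq_True)
qed

theorem proposition3p1:
  fixes A B C P :: complex
  assumes "\<not> collinear {A, B, C}"
    and "incenter A B C \<noteq> circumcenter A B C"
    and "P \<in> affine hull {incenter A B C, circumcenter A B C}"
    and "P \<noteq> incenter A B C"
  shows "steiner_line P (foot P A (incenter A B C)) (foot P B (incenter A B C))
            (foot P C (incenter A B C))
         = euler_line (foot P A (incenter A B C)) (foot P B (incenter A B C))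
            (foot P C (incenter A B C))
       \<and> centroid (foot P A (incenter A B C)) (foot P B (incenter A B C)) (foot P C (incenter A B C))
         \<noteq> circumcenter (foot P A (incenter A B C)) (foot P B (incenter A B C)) (foot P C (incenter A B C))"
proof -
  define I where "I = incenter A B C"
  define M k where "M = (I + P) / 2" and "k = cnj (P - I) / 2"
  note dirs = incenter_circumcenter_line_dirs[OF assms(1,2), folded I_def]
  have "k \<noteq> 0" using assms(4) by (simp add: k_def I_def)
  have "P = M + k * line_dir (P - I)"
    using assms(4) by (simp add: M_def k_def I_def line_dir_def field_simps)
  also have "line_dir (P - I) = line_dir (circumcenter A B C - I)"
    using line_dir_affine_hull assms(3,4) by (simp add: I_def)
  finally have P: "P = M + k * line_dir (circumcenter A B C - I)" .
  have "foot P X I = M + k * line_dir (X - I)" if "X \<noteq> I" for X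
    using foot_eq_on_diameter_circle[OF that] by (simp add: M_def k_def)
  then have feet: "foot P A I = M + k * line_dir (A - I)" "foot P B I = M + k * line_dir (B - I)"
    "foot P C I = M + k * line_dir (C - I)"
    using dirs(1-3) by simp_all
  have "circumcenter A B C - I \<noteq> 0" using assms(2) by (simp add: I_def)
  then show ?thesis
    unfolding I_def[symmetric] feet
    by (subst P, intro steiner_line_eq_euler_line_on_circle \<open>k \<noteq> 0\<close> norm_line_dir dirs)
      (use dirs(1-3) in simp_all)
qed

end
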